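(* Let $d\ge2$, $\delta\in[0,1/d]$, and let $N$ be a $\delta$-upper bounded matrix of dimension $d\times d$. Then $$\inf_{x\in\mathbb{R}^d,\ \|x\|_\infty=1}\|N x\|_\infty\ \ge\ \frac{1-d\delta}{d-1}.$$
   Context: A $d\times d$ matrix $N$ is $\delta$-upper bounded if it is stochastic (non-negative entries, rows summing to $1$), $N_{i,i}\ge1-(d-1)\delta$ for all $i$, and $N_{i,j}\le\delta$ for all $i\ne j$. Here $\|\cdot\|_\infty$ is the maximum norm on $\mathbb{R}^d$. *)

theory Defs
  imports "HOL-Analysis.Analysis"
begin

definition stochastic :: "real^'n^'n \<Rightarrow> bool" where
  "stochastic N \<longleftrightarrow> (\<forall>i j. N $ i $ j \<ge> 0) \<and> (\<forall>i. (\<Sum>j\<in>UNIV. N $ i $ j) = 1)"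

definition delta_upper_bounded :: "real \<Rightarrow> real^'n^'n \<Rightarrow> bool" where
  "delta_upper_bounded \<delta> N \<longleftrightarrow> stochastic N
     \<and> (\<forall>i. N $ i $ i \<ge> 1 - (real CARD('n) - 1) * \<delta>)
     \<and> (\<forall>i j. i \<noteq> j \<longrightarrow> N $ i $ j \<le> \<delta>)"

end

theory Submission
  imports Defs
begin

text \<open>Normalise so that \<open>x\<close> attains its maximum \<open>1\<close> at \<open>i\<close>, and let \<open>m\<close> be its minimum, attained at \<open>k\<close>.
  Since all off-diagonal entries are at most \<open>\<delta>\<close>, row \<open>i\<close> of \<open>N x\<close> lies within \<open>\<delta>\<close> times the total
  gap \<open>\<Sum>j. 1 - x\<^sub>j\<close> of \<open>1\<close>, and row \<open>k\<close> within \<open>\<delta>\<close> times \<open>\<Sum>j. x\<^sub>j - m\<close> of \<open>m\<close>. If \<open>m \<ge> 0\<close> the first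
  row alone is large; if \<open>m < 0\<close> the two rows differ by at least
  \<open>(1 - m)(1 - d\<delta>)\<close>, so one of them is large in modulus (for \<open>d = 2\<close> the first row again suffices).\<close>

lemma infnorm_cart_attained:
  fixes x :: "real^'n"
  obtains i where "\<bar>x$i\<bar> = infnorm x"
proof -
  have "infnorm x = Max (range (\<lambda>i. \<bar>x$i\<bar>))"
    unfolding infnorm_cart by (simp add: full_SetCompr_eq cSup_eq_Max)
  moreover have "Max (range (\<lambda>i. \<bar>x$i\<bar>)) \<in> range (\<lambda>i. \<bar>x$i\<bar>)"
    by (intro Max_in) auto
  ultimately show ?thesis using that by (metis imageE)
qed

lemma matrix_vector_mult_component_ge_at_max:
  fixes A :: "real^'n^'m" and x :: "real^'n"
  assumes "(\<Sum>j\<in>UNIV. A$r$j) = 1"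
    and "\<And>j. j \<noteq> k \<Longrightarrow> A$r$j \<le> \<delta>"
    and "\<And>j. x$j \<le> x$k"
  shows "(A *v x)$r \<ge> x$k - \<delta> * (\<Sum>j\<in>UNIV. x$k - x$j)"
proof -
  have "A$r$j * (x$k - x$j) \<le> \<delta> * (x$k - x$j)" for j
    using assms(2,3) by (cases "j = k") (auto intro: mult_right_mono)
  then have "(\<Sum>j\<in>UNIV. A$r$j * (x$k - x$j)) \<le> \<delta> * (\<Sum>j\<in>UNIV. x$k - x$j)"
    unfolding sum_distrib_left by (intro sum_mono)
  moreover have "(A *v x)$r = x$k - (\<Sum>j\<in>UNIV. A$r$j * (x$k - x$j))"
    using assms(1)
    by (simp add: matrix_vector_mult_def right_diff_distrib sum_subtractf flip: sum_distrib_right)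
  ultimately show ?thesis by simp
qed

lemma matrix_vector_mult_component_le_at_min:
  fixes A :: "real^'n^'m" and x :: "real^'n"
  assumes "(\<Sum>j\<in>UNIV. A$r$j) = 1"
    and "\<And>j. j \<noteq> k \<Longrightarrow> A$r$j \<le> \<delta>"
    and "\<And>j. x$k \<le> x$j"
  shows "(A *v x)$r \<le> x$k + \<delta> * (\<Sum>j\<in>UNIV. x$j - x$k)"
  using matrix_vector_mult_component_ge_at_max[of A r k \<delta> "-x"] assms
  by (simp add: matrix_vector_mult_def sum_negf sum_subtractf)

lemma extreme_rows_lower_bound:
  fixes \<delta> m s I :: real and n :: nat
  assumes "n \<ge> 2" "0 \<le> \<delta>" "n * \<delta> \<le> 1"
    and "-1 \<le> m" "s \<ge> 1 + (real n - 1) * m"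
    and I_max: "I \<ge> 1 - \<delta> * (n - s)" and I_min: "I \<ge> - m - \<delta> * (s - n * m)"
  shows "I \<ge> (1 - n * \<delta>) / (real n - 1)"
proof (cases "m \<ge> 0")
  case True
  then have "(real n - 1) * m \<ge> 0"
    using assms(1) by simp
  then have "s \<ge> 1"
    using assms(5) by linarith
  then have "\<delta> * s \<ge> \<delta>"
    using assms(2) by (metis mult_left_mono mult.right_neutral)
  then have "I \<ge> 1 - (real n - 1) * \<delta>"
    using I_max by (simp add: algebra_simps)
  moreover have "(1 - n * \<delta>) / (real n - 1) \<le> 1 - (real n - 1) * \<delta>"
  proof -
    have "(real n - 1) * (1 - (real n - 1) * \<delta>) - (1 - n * \<delta>)
        = (real n - 2) * (1 - n * \<delta>) + (real n - 1) * \<delta>"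
      by (simp add: algebra_simps)
    also have "\<dots> \<ge> 0"
      using assms(1-3) by simp
    finally show ?thesis
      using assms(1) by (simp add: divide_le_eq mult.commute)
  qed
  ultimately show ?thesis by linarith
next
  case False
  then have "2 * I \<ge> (1 - n * \<delta>) * (1 - m)"
    using I_max I_min by (simp add: algebra_simps)
  moreover have "(1 - n * \<delta>) * (1 - m) \<ge> 1 - n * \<delta>"
    using False assms(3) by (simp add: algebra_simps mult_nonneg_nonneg)
  ultimately have "2 * I \<ge> 1 - n * \<delta>" by linarith
  show ?thesis
  proof (cases "n = 2")
    case True
    then have "s \<ge> 0"
      using assms(4,5) by simp
    then have "\<delta> * s \<ge> 0"
      using assms(2) by simp
    then have "I \<ge> 1 - 2 * \<delta>"
      using I_max True by (simp add: algebra_simps)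
    then show ?thesis
      using True by simp
  next
    case False
    then have "(1 - n * \<delta>) / (real n - 1) \<le> (1 - n * \<delta>) / 2"
      using assms(1,3) by (intro divide_left_mono) auto
    also have "\<dots> \<le> I"
      using \<open>2 * I \<ge> 1 - n * \<delta>\<close> by simp
    finally show ?thesis .
  qed
qed

lemma delta_upper_bounded_infnorm_mult_ge:
  fixes N :: "real^'n^'n" and x :: "real^'n"
  assumes "CARD('n) \<ge> 2" and "0 \<le> \<delta>" and "\<delta> \<le> 1 / real CARD('n)"
    and "delta_upper_bounded \<delta> N"
    and x_norm: "infnorm x = 1" and x_i: "x$i = 1"
  shows "infnorm (N *v x) \<ge> (1 - real CARD('n) * \<delta>) / (real CARD('n) - 1)"
proof -
  define k where "k = arg_min_on (($) x) UNIV"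
  define s where "s = (\<Sum>j\<in>UNIV. x$j)"
  have x_bounded: "\<bar>x$j\<bar> \<le> 1" for j
    using component_le_infnorm_cart[of x j] x_norm by simp
  have x_min: "x$k \<le> x$j" for j
    unfolding k_def by (rule arg_min_least) auto
  have row_sum: "(\<Sum>j\<in>UNIV. N$r$j) = 1" and off_diag: "j \<noteq> r \<Longrightarrow> N$r$j \<le> \<delta>" for r j
    using assms(4) unfolding delta_upper_bounded_def stochastic_def by auto
  have "(N *v x)$i \<ge> 1 - \<delta> * (CARD('n) - s)"
    using matrix_vector_mult_component_ge_at_max[of N i i \<delta> x] row_sum off_diag
      x_bounded[THEN abs_le_D1] x_i
    by (simp add: sum_subtractf s_def)
  then have I_max: "infnorm (N *v x) \<ge> 1 - \<delta> * (CARD('n) - s)"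
    using component_le_infnorm_cart[of "N *v x" i] by linarith
  have "(N *v x)$k \<le> x$k + \<delta> * (s - CARD('n) * x$k)"
    using matrix_vector_mult_component_le_at_min[of N k k \<delta> x] row_sum off_diag x_min
    by (simp add: sum_subtractf s_def)
  then have I_min: "infnorm (N *v x) \<ge> - x$k - \<delta> * (s - CARD('n) * x$k)"
    using component_le_infnorm_cart[of "N *v x" k] by linarith
  have "x$i - x$k \<le> (\<Sum>j\<in>UNIV. x$j - x$k)"
    using member_le_sum[of i UNIV "\<lambda>j. x$j - x$k"] x_min by simp
  then have "s \<ge> 1 + (real CARD('n) - 1) * x$k"
    by (simp add: sum_subtractf s_def x_i algebra_simps)
  moreover have "-1 \<le> x$k" and "CARD('n) * \<delta> \<le> 1"
    using x_bounded[of k] assms(1,3) by (auto simp: field_simps)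
  ultimately show ?thesis
    using extreme_rows_lower_bound[OF assms(1,2)] I_max I_min by blast
qed

theorem lemma13:
  fixes N :: "real^'n^'n" and \<delta> :: real
  assumes "CARD('n) \<ge> 2"
    and "0 \<le> \<delta>" and "\<delta> \<le> 1 / real CARD('n)"
    and "delta_upper_bounded \<delta> N"
  shows "(INF x\<in>{x :: real^'n. infnorm x = 1}. infnorm (N *v x))
           \<ge> (1 - real CARD('n) * \<delta>) / (real CARD('n) - 1)"
proof (rule cINF_greatest)
  obtain i where "\<bar>(\<chi> j. 1 :: real^'n)$i\<bar> = infnorm (\<chi> j. 1 :: real^'n)"
    using infnorm_cart_attained by blast
  then show "{x :: real^'n. infnorm x = 1} \<noteq> {}"
    by (metis (mono_tags) abs_one mem_Collect_eq empty_iff vec_lambda_beta)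
next
  fix x :: "real^'n"
  assume "x \<in> {x. infnorm x = 1}"
  then have x_norm: "infnorm x = 1" by simp
  obtain i where "\<bar>x$i\<bar> = 1"
    using infnorm_cart_attained[of x] x_norm by metis
  then consider "x$i = 1" | "(-x)$i = 1"
    by (cases "x$i \<ge> 0") auto
  then show "infnorm (N *v x) \<ge> (1 - real CARD('n) * \<delta>) / (real CARD('n) - 1)"
  proof cases
    case 1
    then show ?thesis
      using delta_upper_bounded_infnorm_mult_ge[OF assms x_norm] by blast
  next
    case 2
    moreover have "N *v (-x) = - (N *v x)"
      by (simp add: vec_eq_iff matrix_vector_mult_def sum_negf)
    ultimately show ?thesis
      using delta_upper_bounded_infnorm_mult_ge[OF assms, of "-x" i] x_norm
      by (simp add: infnorm_neg)
  qed
qed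

end
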